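(* For all $m,n\ge 3$, the state complexity of $(U_n(d,c,b,a))^R\,(U_m(a,b,c,d))^R$ (which equals $(U_m(a,b,c,d)\,U_n(d,c,b,a))^R$) is $3\cdot 2^{m+n-2}-2^n+1$.
   Context: The state complexity of a regular language is the number of states of its minimal complete DFA. For $n\ge 3$, $\mathcal{U}_n(a,b,c,d)$ is the DFA over $\{a,b,c,d\}$ with states $\{0,\dots,n-1\}$, initial state $0$, final states $\{n-1\}$, where $a$ maps $i\mapsto i+1\pmod n$; $b$ swaps $0$ and $1$ fixing other states; $c$ maps $n-1$ to $0$ fixing other states; $d$ is the identity. $U_n(a,b,c,d)$ is its language. $U_n(d,c,b,a)$ is the language of the DFA with the same states, initial state $0$ and final states $\{n-1\}$, in which $d$ maps $i\mapsto i+1\pmod n$, $c$ swaps $0$ and $1$, $b$ maps $n-1$ to $0$ fixing others, and $a$ is the identity. $L^R$ is the reversal of $L$, and $KL$ is concatenation. *)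

theory Defs
  imports Main
begin

datatype sym = a | b | c | d

definition is_cdfa :: "nat \<Rightarrow> (nat \<Rightarrow> 'x \<Rightarrow> nat) \<Rightarrow> nat \<Rightarrow> nat set \<Rightarrow> bool" where
  "is_cdfa k delta q0 F \<longleftrightarrow> q0 < k \<and> F \<subseteq> {..<k} \<and> (\<forall>q<k. \<forall>x. delta q x < k)"

definition dfa_lang :: "(nat \<Rightarrow> 'x \<Rightarrow> nat) \<Rightarrow> nat \<Rightarrow> nat set \<Rightarrow> 'x list set" where
  "dfa_lang delta q0 F = {w. foldl delta q0 w \<in> F}"

text \<open>State complexity: number of states of a minimal complete DFA accepting L
(the alphabet is the whole type 'x).\<close>
definition sc :: "'x list set \<Rightarrow> nat" where
  "sc L = (LEAST k. \<exists>delta q0 F. is_cdfa k delta q0 F \<and> dfa_lang delta q0 F = L)"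

definition conc :: "'x list set \<Rightarrow> 'x list set \<Rightarrow> 'x list set" where
  "conc K L = {u @ v | u v. u \<in> K \<and> v \<in> L}"

definition reversal :: "'x list set \<Rightarrow> 'x list set" where
  "reversal L = rev ` L"

fun delta_abcd :: "nat \<Rightarrow> nat \<Rightarrow> sym \<Rightarrow> nat" where
  "delta_abcd n i a = (i + 1) mod n"
| "delta_abcd n i b = (if i = 0 then 1 else if i = 1 then 0 else i)"
| "delta_abcd n i c = (if i = n - 1 then 0 else i)"
| "delta_abcd n i d = i"

fun delta_dcba :: "nat \<Rightarrow> nat \<Rightarrow> sym \<Rightarrow> nat" where
  "delta_dcba n i d = (i + 1) mod n"
| "delta_dcba n i c = (if i = 0 then 1 else if i = 1 then 0 else i)"
| "delta_dcba n i b = (if i = n - 1 then 0 else i)"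
| "delta_dcba n i a = i"

definition U_abcd :: "nat \<Rightarrow> sym list set" where
  "U_abcd n = dfa_lang (delta_abcd n) 0 {n - 1}"

definition U_dcba :: "nat \<Rightarrow> sym list set" where
  "U_dcba n = dfa_lang (delta_dcba n) 0 {n - 1}"

end

theory Submission
  imports Defs
begin

(* By the Myhill-Nerode theorem, the state complexity of a language is the number of its distinct
   left quotients (sc_eq_card_quotients).  For L, the quotient by a word u is determined by a pair
   (S,T) of state sets, obtained by reading u backwards through both DFAs: S is the set of states
   of the n-state DFA from which rev u reaches its final state n-1, and T is the set of states q of
   the m-state DFA such that u = x @ y with rev x accepted by the first DFA and rev y leading from
   q to m-1 (state_eq).  These pairs evolve by a deterministic subset transition "step", and
   u \<in> L iff 0 \<in> T.  We then show
   (1) the reachable pairs are exactly Valid = {(S,T). 0 \<in> S \<longrightarrow> m-1 \<in> T} (range_state):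
       the letters b, c, d generate every first component, and a, d then build up any T;
   (2) valid pairs with T \<noteq> {0..m-1} have pairwise distinct futures (future_inj), none of which is
       the universal language, while every pair with T = {0..m-1} accepts everything.
   Since |Valid| = 3*2^(m+n-2) and 2^n valid pairs have full T, the count follows. *)

definition lquot :: "'x list set \<Rightarrow> 'x list \<Rightarrow> 'x list set" where
  "lquot W u = {v. u @ v \<in> W}"

lemma foldl_in_states:
  assumes "\<And>q x. q < k \<Longrightarrow> delta q x < k" and "q < k"
  shows "foldl delta q w < k"
  using assms(2) by (induction w arbitrary: q) (auto intro: assms(1))

(* Myhill-Nerode, upper bound: if W has finitely many left quotients, the quotients themselves,
   numbered 0..k-1, are the states of a complete DFA recognising W. *)
lemma quotient_dfa:
  fixes W :: "'x list set"
  assumes fin: "finite (range (lquot W))"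
  shows "\<exists>delta q0 F. is_cdfa (card (range (lquot W))) delta q0 F \<and> dfa_lang delta q0 F = W"
proof -
  define k where "k = card (range (lquot W))"
  obtain h where h: "bij_betw h {0..<k} (range (lquot W))"
    using ex_bij_betw_nat_finite[OF fin] k_def by blast
  define g where "g = the_inv_into {0..<k} h"
  have hg: "h (g L) = L" if "L \<in> range (lquot W)" for L
    using f_the_inv_into_f_bij_betw[OF h that] g_def by simp
  have g_lt: "g L < k" if "L \<in> range (lquot W)" for L
    using bij_betwE[OF bij_betw_the_inv_into[OF h]] that g_def by fastforce
  have h_in: "h i \<in> range (lquot W)" if "i < k" for i
    using h that bij_betwE by fastforce
  define delta where "delta = (\<lambda>i x. g {v. x # v \<in> h i})"
  define F where "F = {i. i < k \<and> [] \<in> h i}"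
  have run: "foldl delta (g (lquot W [])) w = g (lquot W w)" for w
  proof (induction w rule: rev_induct)
    case (snoc x w)
    have "{v. x # v \<in> lquot W w} = lquot W (w @ [x])" by (simp add: lquot_def)
    then show ?case using snoc hg[of "lquot W w"] by (simp add: delta_def)
  qed simp
  have "is_cdfa k delta (g (lquot W [])) F"
    unfolding is_cdfa_def
  proof (intro conjI allI impI)
    fix q x assume "q < k"
    then obtain u where "h q = lquot W u" using h_in by blast
    moreover have "{v. x # v \<in> lquot W u} = lquot W (u @ [x])" by (simp add: lquot_def)
    ultimately show "delta q x < k" using g_lt by (simp add: delta_def)
  qed (use g_lt F_def in auto)
  moreover have "dfa_lang delta (g (lquot W [])) F = W"
  proof -
    have "w \<in> dfa_lang delta (g (lquot W [])) F \<longleftrightarrow> [] \<in> lquot W w" for w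
      using g_lt hg by (simp add: dfa_lang_def run F_def)
    then show ?thesis by (auto simp: lquot_def)
  qed
  ultimately show ?thesis using k_def by blast
qed

(* Myhill-Nerode, lower bound: each quotient of W is the language accepted from the state reached
   on the corresponding prefix, so a DFA for W has at least as many states as W has quotients. *)
lemma card_quotients_le:
  assumes "is_cdfa k delta q0 F" and "dfa_lang delta q0 F = W"
  shows "card (range (lquot W)) \<le> k"
proof -
  have "range (lquot W) \<subseteq> (\<lambda>q. {v. foldl delta q v \<in> F}) ` {..<k}"
  proof
    fix L assume "L \<in> range (lquot W)"
    then obtain u where u: "L = lquot W u" by blast
    have "foldl delta q0 u < k"
      using assms(1) by (intro foldl_in_states) (auto simp: is_cdfa_def)
    moreover have "L = {v. foldl delta (foldl delta q0 u) v \<in> F}"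
      using assms(2) u by (auto simp: lquot_def dfa_lang_def)
    ultimately show "L \<in> (\<lambda>q. {v. foldl delta q v \<in> F}) ` {..<k}" by blast
  qed
  then have "card (range (lquot W)) \<le> card ((\<lambda>q. {v. foldl delta q v \<in> F}) ` {..<k})"
    by (intro card_mono) auto
  also have "\<dots> \<le> k" using card_image_le[of "{..<k}"] by simp
  finally show ?thesis .
qed

theorem sc_eq_card_quotients:
  assumes "finite (range (lquot W))"
  shows "sc W = card (range (lquot W))"
  unfolding sc_def
  by (rule Least_equality) (use quotient_dfa[OF assms] card_quotients_le in blast)+

lemma card_subsets_without:
  assumes "finite A" "x \<in> A"
  shows "card {S. S \<subseteq> A \<and> x \<notin> S} = 2 ^ (card A - 1)"
proof -
  have "{S. S \<subseteq> A \<and> x \<notin> S} = Pow (A - {x})" by auto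
  then show ?thesis using assms by (simp add: card_Pow)
qed

lemma card_subsets_with:
  assumes "finite A" "x \<in> A"
  shows "card {S. S \<subseteq> A \<and> x \<in> S} = 2 ^ (card A - 1)"
proof -
  have "bij_betw (insert x) (Pow (A - {x})) {S. S \<subseteq> A \<and> x \<in> S}"
    by (rule bij_betw_byWitness[where f' = "\<lambda>S. S - {x}"]) (use assms in auto)
  then show ?thesis using assms by (simp add: bij_betw_same_card[symmetric] card_Pow)
qed

lemma snoc_eq_append_iff:
  "(u @ [z] = x @ y) \<longleftrightarrow> (y = [] \<and> x = u @ [z]) \<or> (\<exists>y'. y = y' @ [z] \<and> u = x @ y')"
  by (cases y rule: rev_cases) auto

locale rev_concat =
  fixes m n :: nat
  assumes m3: "m \<ge> 3" and n3: "n \<ge> 3"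
begin

definition L :: "sym list set" where
  "L = conc (reversal (U_dcba n)) (reversal (U_abcd m))"

definition preK :: "sym \<Rightarrow> nat set \<Rightarrow> nat set" where
  "preK x S = {p. p < n \<and> delta_dcba n p x \<in> S}"

definition preL :: "sym \<Rightarrow> nat set \<Rightarrow> nat set" where
  "preL x T = {q. q < m \<and> delta_abcd m q x \<in> T}"

(* The reversed-concatenation automaton on pairs (S,T): both components move to preimages, and
   when the start state 0 of the first DFA enters S, the final state m-1 of the second enters T. *)
definition step :: "nat set \<times> nat set \<Rightarrow> sym \<Rightarrow> nat set \<times> nat set" where
  "step p x = (preK x (fst p), preL x (snd p) \<union> (if 0 \<in> preK x (fst p) then {m-1} else {}))"

definition state :: "sym list \<Rightarrow> nat set \<times> nat set" where
  "state u = foldl step ({n-1}, {}) u"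

definition future :: "nat set \<times> nat set \<Rightarrow> sym list set" where
  "future p = {v. 0 \<in> snd (foldl step p v)}"

lemma delta_dcba_lt: "p < n \<Longrightarrow> delta_dcba n p x < n"
  using n3 by (cases x) auto

lemma delta_abcd_lt: "q < m \<Longrightarrow> delta_abcd m q x < m"
  using m3 by (cases x) auto

(* The intended meaning of the pair reached on u, as sets of states of the original DFAs. *)
definition Kset :: "sym list \<Rightarrow> nat set" where
  "Kset u = {p. p < n \<and> foldl (delta_dcba n) p (rev u) = n-1}"

definition Lset :: "sym list \<Rightarrow> nat set" where
  "Lset u = {q. q < m \<and> (\<exists>x y. u = x @ y \<and> foldl (delta_dcba n) 0 (rev x) = n-1
                              \<and> foldl (delta_abcd m) q (rev y) = m-1)}"

lemma Lset_snoc: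
  "Lset (u @ [z]) = preL z (Lset u) \<union> (if 0 \<in> Kset (u @ [z]) then {m-1} else {})"
proof -
  have split: "(\<exists>x y. u @ [z] = x @ y \<and> P x \<and> R y)
      \<longleftrightarrow> (P (u @ [z]) \<and> R []) \<or> (\<exists>x y'. u = x @ y' \<and> P x \<and> R (y' @ [z]))" for P R
    unfolding snoc_eq_append_iff by blast
  show ?thesis
    unfolding Lset_def split using n3 m3
    by (auto simp: preL_def Kset_def delta_abcd_lt)
qed

lemma state_eq: "state u = (Kset u, Lset u)"
proof (induction u rule: rev_induct)
  case Nil
  show ?case using n3 by (auto simp: state_def Kset_def Lset_def)
next
  case (snoc z u)
  have "Kset (u @ [z]) = preK z (Kset u)"
    by (auto simp: Kset_def preK_def delta_dcba_lt)
  then show ?case using snoc Lset_snoc by (simp add: state_def step_def)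
qed

lemma mem_L_iff: "w \<in> L \<longleftrightarrow> 0 \<in> snd (state w)"
proof -
  have "w \<in> L \<longleftrightarrow> (\<exists>x y. w = x @ y \<and> rev x \<in> U_dcba n \<and> rev y \<in> U_abcd m)"
    unfolding L_def conc_def reversal_def by force
  also have "\<dots> \<longleftrightarrow> 0 \<in> Lset w"
    using m3 by (auto simp: Lset_def U_dcba_def U_abcd_def dfa_lang_def)
  finally show ?thesis by (simp add: state_eq)
qed

lemma lquot_L: "lquot L u = future (state u)"
  by (simp add: lquot_def mem_L_iff future_def state_def)

lemma future_Cons: "x # v \<in> future p \<longleftrightarrow> v \<in> future (step p x)"
  by (simp add: future_def)

(* Cyclic rotations of state sets: the preimages under the cyclic letters d (first DFA) and a
   (second DFA) are rotations by one. *)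
definition rotK :: "nat set \<Rightarrow> nat \<Rightarrow> nat set" where
  "rotK S k = {p. p < n \<and> (p + k) mod n \<in> S}"

definition rotL :: "nat set \<Rightarrow> nat \<Rightarrow> nat set" where
  "rotL T k = {q. q < m \<and> (q + k) mod m \<in> T}"

lemma mod_add_mod_add: "((x + k) mod (N::nat) + j) mod N = (x + (j + k)) mod N"
  by (metis mod_add_left_eq add.assoc add.commute)

lemma rotK_rotK: "rotK (rotK S j) k = rotK S (j + k)"
  by (auto simp: rotK_def mod_add_mod_add)

lemma rotL_rotL: "rotL (rotL T j) k = rotL T (j + k)"
  by (auto simp: rotL_def mod_add_mod_add)

lemma rotK_0: "S \<subseteq> {..<n} \<Longrightarrow> rotK S 0 = S"
  and rotK_n: "S \<subseteq> {..<n} \<Longrightarrow> rotK S n = S"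
  by (auto simp: rotK_def)

lemma rotL_0: "T \<subseteq> {..<m} \<Longrightarrow> rotL T 0 = T"
  and rotL_m: "T \<subseteq> {..<m} \<Longrightarrow> rotL T m = T"
  by (auto simp: rotL_def)

lemma rotL_Un: "rotL (A \<union> B) k = rotL A k \<union> rotL B k"
  by (auto simp: rotL_def)

lemma rotL_last: assumes "i < m" shows "rotL {m-1} (m-1-i) = {i}"
proof -
  have "(p + (m-1-i)) mod m = m-1 \<longleftrightarrow> p = i" if "p < m" for p
  proof (cases "p \<le> i")
    case True
    then have "(p + (m-1-i)) mod m = p + (m-1-i)" using assms by simp
    then show ?thesis using True assms by arith
  next
    case False
    then have "p + (m-1-i) = (p-1-i) + m" using assms by arith
    moreover have "p-1-i < m" using that by arith
    ultimately have "(p + (m-1-i)) mod m = p-1-i" by simp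
    then show ?thesis using False that by arith
  qed
  then show ?thesis using assms by (auto simp: rotL_def)
qed

lemma step_a: "step (S,T) a = (S \<inter> {..<n}, rotL T 1 \<union> (if 0 \<in> S then {m-1} else {}))"
  using n3 by (auto simp: step_def preK_def preL_def rotL_def)

lemma step_d: "step (S,T) d = (rotK S 1, T \<inter> {..<m} \<union> (if 1 \<in> S then {m-1} else {}))"
  using n3 by (auto simp: step_def preK_def preL_def rotK_def)

lemma foldl_replicate_Suc: "foldl f s (replicate (Suc k) x) = f (foldl f s (replicate k x)) x"
  by (simp add: replicate_append_same[symmetric])

lemma fold_a:
  assumes "S \<subseteq> {..<n}" "0 \<notin> S" "T \<subseteq> {..<m}"
  shows "foldl step (S,T) (replicate k a) = (S, rotL T k)"
  by (induction k) (use assms in \<open>auto simp del: replicate_Suc simp: foldl_replicate_Suc step_a rotL_rotL rotL_0\<close>)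

(* Reading a^k when 0 \<in> S rotates T and also fills in the top k states, since m-1 is added at
   every step. *)
lemma fold_a_fill:
  assumes "S \<subseteq> {..<n}" "0 \<in> S" "T \<subseteq> {..<m}" "k \<le> m"
  shows "foldl step (S,T) (replicate k a) = (S, {q. q < m \<and> ((q + k) mod m \<in> T \<or> m - k \<le> q)})"
  using assms(4)
proof (induction k)
  case 0 then show ?case using assms by (auto simp: rotL_0)
next
  case (Suc k)
  have "q \<in> rotL {q. q < m \<and> ((q + k) mod m \<in> T \<or> m - k \<le> q)} 1 \<union> {m-1} \<longleftrightarrow>
        q < m \<and> ((q + Suc k) mod m \<in> T \<or> m - Suc k \<le> q)" for q
  proof (cases "q = m - 1")
    case True then show ?thesis using m3 Suc.prems by (auto simp: rotL_def)
  next
    case False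
    then have "q < m \<Longrightarrow> (q + 1) mod m = q + 1" by simp
    then show ?thesis using False Suc.prems m3 by (auto simp: rotL_def mod_add_left_eq)
  qed
  then show ?case using Suc assms by (auto simp del: replicate_Suc simp: foldl_replicate_Suc step_a)
qed

(* Reading d^j rotates S; m-1 is added to T iff 0 is hit on the way, i.e. some l in 1..j has
   l mod n \<in> S. *)
lemma fold_d:
  assumes "S \<subseteq> {..<n}" "T \<subseteq> {..<m}"
  shows "foldl step (S,T) (replicate j d) =
    (rotK S j, T \<union> (if \<exists>l. 1 \<le> l \<and> l \<le> j \<and> l mod n \<in> S then {m-1} else {}))"
proof (induction j)
  case 0 then show ?case using assms by (auto simp: rotK_0)
next
  case (Suc j)
  have "1 \<in> rotK S j \<longleftrightarrow> Suc j mod n \<in> S" using n3 by (simp add: rotK_def)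
  moreover have "(\<exists>l. 1 \<le> l \<and> l \<le> Suc j \<and> l mod n \<in> S)
      \<longleftrightarrow> (\<exists>l. 1 \<le> l \<and> l \<le> j \<and> l mod n \<in> S) \<or> Suc j mod n \<in> S"
    using le_Suc_eq by auto
  ultimately show ?case using Suc assms m3 by (auto simp del: replicate_Suc simp: foldl_replicate_Suc step_d rotK_rotK)
qed

lemma fold_full: "snd (foldl step (S, {..<m}) w) = {..<m}"
proof (induction w arbitrary: S)
  case (Cons x w)
  have "snd (step (S, {..<m}) x) = {..<m}"
    using m3 delta_abcd_lt by (auto simp: step_def preL_def)
  then show ?case using Cons by (metis foldl_Cons prod.collapse)
qed simp

definition reachable :: "nat set \<times> nat set \<Rightarrow> bool" where
  "reachable p \<longleftrightarrow> p \<in> range state"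

lemma reachable_init: "reachable ({n-1}, {})"
  unfolding reachable_def by (rule range_eqI[of _ _ "[]"]) (simp add: state_def)

lemma reachable_fold: "reachable p \<Longrightarrow> reachable (foldl step p w)"
proof -
  assume "reachable p"
  then obtain u where "p = state u" by (auto simp: reachable_def)
  then show ?thesis unfolding reachable_def by (intro range_eqI[of _ _ "u @ w"]) (simp add: state_def)
qed

lemma reachable_step: "reachable p \<Longrightarrow> reachable (step p x)"
  using reachable_fold[of p "[x]"] by simp

definition Valid :: "(nat set \<times> nat set) set" where
  "Valid = {(S,T). S \<subseteq> {..<n} \<and> T \<subseteq> {..<m} \<and> (0 \<in> S \<longrightarrow> m-1 \<in> T)}"

lemma step_Valid: "step p x \<in> Valid"
  using m3 by (auto simp: step_def Valid_def preK_def preL_def)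

lemma reachable_Valid: "reachable p \<Longrightarrow> p \<in> Valid"
proof -
  assume "reachable p"
  then obtain u where "p = state u" by (auto simp: reachable_def)
  then show ?thesis
  proof (cases u rule: rev_cases)
    case Nil then show ?thesis using \<open>p = state u\<close> n3 by (auto simp: state_def Valid_def)
  next
    case (snoc v x) then show ?thesis using \<open>p = state u\<close> step_Valid by (simp add: state_def)
  qed
qed

(* S is a reachable first component with the second component inside {m-1}; the letters b, c, d
   preserve this restriction, so they can be used freely to manipulate S. *)
definition reachable_low :: "nat set \<Rightarrow> bool" where
  "reachable_low S \<longleftrightarrow> (\<exists>T. T \<subseteq> {m-1} \<and> reachable (S,T))"

lemma reachable_low_subset: "reachable_low S \<Longrightarrow> S \<subseteq> {..<n}"
  using reachable_Valid by (auto simp: reachable_low_def Valid_def)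

lemma reachable_low_step: "reachable_low S \<Longrightarrow> x \<noteq> a \<Longrightarrow> reachable_low (preK x S)"
proof -
  assume "reachable_low S" and x: "x \<noteq> a"
  then obtain T where T: "T \<subseteq> {m-1}" "reachable (S,T)" by (auto simp: reachable_low_def)
  have "snd (step (S,T) x) \<subseteq> {m-1}"
    using T(1) x m3 by (cases x) (auto simp: step_def preL_def)
  moreover have "reachable (step (S,T) x)" using reachable_step T(2) by blast
  moreover have "fst (step (S,T) x) = preK x S" by (simp add: step_def)
  ultimately show ?thesis unfolding reachable_low_def by (metis prod.collapse)
qed

lemma reachable_low_rot: "reachable_low S \<Longrightarrow> reachable_low (rotK S k)"
proof (induction k)
  case 0 then show ?case using reachable_low_subset rotK_0 by simp
next
  case (Suc k)
  have "preK d (rotK S k) = rotK (rotK S k) 1" by (auto simp: preK_def rotK_def)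
  then have "preK d (rotK S k) = rotK S (Suc k)" by (simp add: rotK_rotK)
  then show ?case using reachable_low_step[OF Suc.IH[OF Suc.prems], of d] by simp
qed

lemma reachable_low_unrot:
  assumes "reachable_low (rotK S j)" "S \<subseteq> {..<n}" "j \<le> n"
  shows "reachable_low S"
proof -
  have "rotK (rotK S j) (n-j) = S" using assms(2,3) by (simp add: rotK_rotK rotK_n)
  then show ?thesis using reachable_low_rot[OF assms(1), of "n-j"] by simp
qed

(* Conjugated by rotation, b merges the states j-1 and j and c swaps j and j+1. *)
lemma preK_b_rot:
  assumes "1 \<le> j" "j < n"
  shows "preK b (rotK S j) = rotK {p. p < n \<and> (if p = j-1 then j else p) \<in> S} j"
proof -
  have "p \<in> preK b (rotK S j) \<longleftrightarrow> p \<in> rotK {p. p < n \<and> (if p = j-1 then j else p) \<in> S} j" for p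
    using assms n3 by (cases "p < n") (auto simp: preK_def rotK_def mod_if split: if_splits)
  then show ?thesis by blast
qed

lemma preK_c_rot:
  assumes "j + 1 < n"
  shows "preK c (rotK S j) =
    rotK {p. p < n \<and> (if p = j then j+1 else if p = j+1 then j else p) \<in> S} j"
proof -
  have "p \<in> preK c (rotK S j) \<longleftrightarrow>
      p \<in> rotK {p. p < n \<and> (if p = j then j+1 else if p = j+1 then j else p) \<in> S} j" for p
    using assms n3 by (cases "p < n") (auto simp: preK_def rotK_def mod_if split: if_splits)
  then show ?thesis by blast
qed

(* Using b: from i \<in> S, also i-1 can be added. *)
lemma reachable_low_insert_pred:
  assumes R: "reachable_low S" and i: "i \<in> S" "1 \<le> i" "i < n"
  shows "reachable_low (insert (i-1) S)"
proof -
  have S: "S \<subseteq> {..<n}" using reachable_low_subset R .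
  have "{p. p < n \<and> (if p = i-1 then i else p) \<in> S} = insert (i-1) S"
    using i S by (auto split: if_splits)
  then have "reachable_low (rotK (insert (i-1) S) i)"
    using reachable_low_step[OF reachable_low_rot[OF R], of b i] preK_b_rot[OF i(2,3)] by simp
  then show ?thesis using reachable_low_unrot S i by auto
qed

(* Using c: an element i whose predecessor is missing can be moved down to i-1. *)
lemma reachable_low_move_pred:
  assumes R: "reachable_low S" and i: "i \<in> S" "1 \<le> i" "i < n" "i-1 \<notin> S"
  shows "reachable_low (insert (i-1) (S - {i}))"
proof -
  have S: "S \<subseteq> {..<n}" using reachable_low_subset R .
  have "{p. p < n \<and> (if p = i-1 then i-1+1 else if p = i-1+1 then i-1 else p) \<in> S}
      = insert (i-1) (S - {i})"
    using i S by (auto split: if_splits)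
  then have "reachable_low (rotK (insert (i-1) (S - {i})) (i-1))"
    using reachable_low_step[OF reachable_low_rot[OF R], of c "i-1"] preK_c_rot[of "i-1" S] i
    by simp
  moreover have "insert (i-1) (S - {i}) \<subseteq> {..<n}" using S i by auto
  ultimately show ?thesis using reachable_low_unrot i by simp
qed

lemma reachable_low_insert_below:
  assumes "reachable_low S" "i \<in> S" "i < n" "j < i" "\<forall>l. j \<le> l \<and> l < i \<longrightarrow> l \<notin> S"
  shows "reachable_low (insert j S)"
  using assms
proof (induction "i - 1 - j" arbitrary: j)
  case 0
  then have "j = i - 1" by simp
  then show ?case using reachable_low_insert_pred 0 by simp
next
  case (Suc k)
  then have "reachable_low (insert (j+1) S)" by (intro Suc.hyps) auto
  moreover have "j + 1 \<notin> S" "j \<notin> S" using Suc by auto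
  ultimately have "reachable_low (insert (j+1-1) (insert (j+1) S - {j+1}))"
    using Suc by (intro reachable_low_move_pred) auto
  moreover have "insert (j+1-1) (insert (j+1) S - {j+1}) = insert j S"
    using \<open>j + 1 \<notin> S\<close> by auto
  ultimately show ?case by simp
qed

(* All singletons, by moving n-1 downwards. *)
lemma reachable_low_singleton: "j < n \<Longrightarrow> reachable_low {j}"
proof (induction "n - 1 - j" arbitrary: j)
  case 0
  then have "j = n - 1" by simp
  then show ?case using reachable_init by (auto simp: reachable_low_def)
next
  case (Suc k)
  then have "reachable_low {j+1}" by (intro Suc.hyps) auto
  from reachable_low_move_pred[OF this] show ?case using Suc by simp
qed

(* All nonempty sets, by adding the minimum below the (reachable) rest. *)
lemma reachable_low_nonempty: "S \<subseteq> {..<n} \<Longrightarrow> S \<noteq> {} \<Longrightarrow> reachable_low S"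
proof (induction "card S" arbitrary: S rule: less_induct)
  case less
  have fin: "finite S" using less.prems finite_subset by blast
  show ?case
  proof (cases "card S = 1")
    case True
    then obtain j where "S = {j}" using card_1_singletonE by blast
    then show ?thesis using reachable_low_singleton less.prems by auto
  next
    case False
    define i where "i = Min S"
    define S' where "S' = S - {i}"
    have i: "i \<in> S" "\<forall>x\<in>S. i \<le> x"
      using Min_in[OF fin less.prems(2)] Min_le[OF fin] by (auto simp: i_def)
    have ne: "S' \<noteq> {}"
    proof
      assume "S' = {}"
      then have "S = {i}" using i(1) S'_def by blast
      then show False using False by simp
    qed
    have "card S' < card S" unfolding S'_def using fin i(1) by (rule card_Diff1_less)
    moreover have "S' \<subseteq> {..<n}" using less.prems(1) S'_def by blast
    ultimately have R: "reachable_low S'" using ne by (rule less.hyps)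
    define j where "j = Min S'"
    have "finite S'" using fin S'_def by blast
    then have j: "j \<in> S'" "\<forall>x\<in>S'. j \<le> x"
      using Min_in[OF _ \<open>S' \<noteq> {}\<close>] Min_le by (auto simp: j_def)
    have "j \<in> S" "j \<noteq> i" using j(1) S'_def by auto
    then have "i < j" using i(2) by (simp add: order_less_le)
    moreover have "j < n" using \<open>j \<in> S\<close> less.prems(1) by blast
    moreover have "\<forall>l. i \<le> l \<and> l < j \<longrightarrow> l \<notin> S'" using j(2) by (auto simp: not_le)
    ultimately have "reachable_low (insert i S')"
      using reachable_low_insert_below[OF R j(1)] by simp
    then show ?thesis using i(1) S'_def by (simp add: insert_absorb)
  qed
qed

(* All sets: the empty set is the b-preimage of {n-1}. *)
lemma reachable_low_all: "S \<subseteq> {..<n} \<Longrightarrow> reachable_low S"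
proof (cases "S = {}")
  case True
  have "preK b {n-1} = {}" using n3 by (auto simp: preK_def)
  then show ?thesis using True reachable_low_step[OF reachable_low_singleton[of "n-1"], of b] n3
    by simp
qed (rule reachable_low_nonempty)

(* Pairs (S, {}) with 0 \<notin> S, via the letter c which empties T \<subseteq> {m-1}. *)
lemma reachable_empty_L: "S \<subseteq> {..<n} \<Longrightarrow> 0 \<notin> S \<Longrightarrow> reachable (S, {})"
proof -
  assume S: "S \<subseteq> {..<n}" "0 \<notin> S"
  have "reachable_low (preK c S)" by (rule reachable_low_all) (auto simp: preK_def)
  then obtain T where T: "T \<subseteq> {m-1}" "reachable (preK c S, T)"
    unfolding reachable_low_def by blast
  have "preK c (preK c S) = S" using S n3 by (auto simp: preK_def) (metis gr0I)
  moreover have "preL c T = {}" using T(1) m3 by (auto simp: preL_def)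
  ultimately show ?thesis using reachable_step[OF T(2), of c] S by (simp add: step_def)
qed

(* Adding any i to T when 0 \<notin> S \<noteq> {}: rotate i+1 places with a, add m-1 with one full cycle
   d^n, and rotate back with a^(m-1-i). *)
lemma reachable_insert_L:
  assumes R: "reachable (S,T)" and S: "S \<subseteq> {..<n}" "S \<noteq> {}" "0 \<notin> S"
    and T: "T \<subseteq> {..<m}" and i: "i < m"
  shows "reachable (S, insert i T)"
proof -
  define T1 where "T1 = rotL T (i+1)"
  have T1: "T1 \<subseteq> {..<m}" "T1 \<union> {m-1} \<subseteq> {..<m}" using m3 by (auto simp: T1_def rotL_def)
  obtain s where s: "s \<in> S" using S by blast
  moreover have "s \<noteq> 0" "s < n" using s S by auto
  ultimately have "\<exists>l. 1 \<le> l \<and> l \<le> n \<and> l mod n \<in> S" by (intro exI[of _ s]) auto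
  then have dn: "foldl step (S,T1) (replicate n d) = (S, T1 \<union> {m-1})"
    using fold_d[OF S(1) T1(1), of n] rotK_n[OF S(1)] by simp
  have "rotL (T1 \<union> {m-1}) (m-1-i) = rotL T1 (m-1-i) \<union> rotL {m-1} (m-1-i)"
    by (rule rotL_Un)
  also have "\<dots> = T \<union> {i}" using i T rotL_last[OF i] by (simp add: T1_def rotL_rotL rotL_m)
  finally have unrot: "rotL (T1 \<union> {m-1}) (m-1-i) = insert i T" by simp
  have "foldl step (S,T) (replicate (i+1) a @ replicate n d @ replicate (m-1-i) a) = (S, insert i T)"
    using fold_a[OF S(1,3) T] fold_a[OF S(1,3) T1(2)] dn unrot by (simp del: replicate_Suc add: T1_def)
  then show ?thesis using reachable_fold[OF R] by metis
qed

lemma reachable_no0: "S \<subseteq> {..<n} \<Longrightarrow> S \<noteq> {} \<Longrightarrow> 0 \<notin> S \<Longrightarrow> T \<subseteq> {..<m} \<Longrightarrow> reachable (S,T)"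
proof -
  assume S: "S \<subseteq> {..<n}" "S \<noteq> {}" "0 \<notin> S" and T: "T \<subseteq> {..<m}"
  have "finite T" using T finite_subset by blast
  then show ?thesis using T
    by (induction T rule: finite_induct) (use reachable_empty_L reachable_insert_L S in auto)
qed

(* Pairs with m-1 \<in> T and S neither empty nor full: rotate a missing state x of S to 0, reach
   that pair, and rotate back with d^(n-x); T is unaffected because m-1 \<in> T already. *)
lemma reachable_last_L:
  assumes S: "S \<subseteq> {..<n}" "S \<noteq> {}" "S \<noteq> {..<n}" and T: "T \<subseteq> {..<m}" "m-1 \<in> T"
  shows "reachable (S,T)"
proof -
  obtain x where x: "x < n" "x \<notin> S" using S by blast
  define S0 where "S0 = rotK S x"
  have S0: "S0 \<subseteq> {..<n}" "0 \<notin> S0" using x by (auto simp: S0_def rotK_def)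
  have unrot: "rotK S0 (n-x) = S" using x S(1) by (simp add: S0_def rotK_rotK rotK_n)
  then have "S0 \<noteq> {}" using S(2) by (auto simp: rotK_def)
  then have "reachable (foldl step (S0,T) (replicate (n-x) d))"
    using reachable_fold reachable_no0 S0 T(1) by blast
  moreover have "T \<union> (if P then {m-1} else {}) = T" for P using T(2) by auto
  ultimately show ?thesis using fold_d[OF S0(1) T(1)] unrot by simp
qed

(* The remaining pairs: S full (through b from {..<n-1}) and S empty (through b from {n-1}). *)
lemma reachable_full_K:
  assumes T: "T \<subseteq> {..<m}" "m-1 \<in> T"
  shows "reachable ({..<n}, T)"
proof -
  have "preL b T \<subseteq> {..<m}" "m-1 \<in> preL b T" using T m3 by (auto simp: preL_def)
  moreover have "{..<n-1} \<subseteq> {..<n}" "{..<n-1} \<noteq> {}" "{..<n-1} \<noteq> {..<n}"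
    using n3 by (auto simp: lessThan_empty_iff)
  ultimately have "reachable ({..<n-1}, preL b T)" using reachable_last_L by simp
  moreover have "preK b {..<n-1} = {..<n}" using n3 by (auto simp: preK_def)
  moreover have "preL b (preL b T) = T" using T m3 by (auto simp: preL_def)
  ultimately have "step ({..<n-1}, preL b T) b = ({..<n}, T)" using T(2) n3 by (auto simp: step_def)
  then show ?thesis using reachable_step[OF \<open>reachable ({..<n-1}, preL b T)\<close>, of b] by simp
qed

lemma reachable_empty_K:
  assumes T: "T \<subseteq> {..<m}"
  shows "reachable ({}, T)"
proof -
  have "preL b T \<subseteq> {..<m}" by (auto simp: preL_def)
  then have "reachable ({n-1}, preL b T)" using reachable_no0 n3 by simp
  moreover have "preK b {n-1} = {}" using n3 by (auto simp: preK_def)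
  moreover have "preL b (preL b T) = T" using T m3 by (auto simp: preL_def)
  ultimately have "step ({n-1}, preL b T) b = ({}, T)" by (simp add: step_def)
  then show ?thesis using reachable_step[OF \<open>reachable ({n-1}, preL b T)\<close>, of b] by simp
qed

theorem range_state: "range state = Valid"
proof
  show "range state \<subseteq> Valid" using reachable_Valid unfolding reachable_def by blast
next
  show "Valid \<subseteq> range state"
  proof (clarify)
    fix S T assume "(S,T) \<in> Valid"
    then have S: "S \<subseteq> {..<n}" "T \<subseteq> {..<m}" "0 \<in> S \<longrightarrow> m-1 \<in> T" by (auto simp: Valid_def)
    consider "S = {}" | "S \<noteq> {}" "0 \<notin> S" | "S = {..<n}" | "S \<noteq> {}" "0 \<in> S" "S \<noteq> {..<n}"
      by blast
    then have "reachable (S,T)"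
      by cases (use S n3 reachable_empty_K reachable_no0 reachable_full_K reachable_last_L in auto)
    then show "(S,T) \<in> range state" by (simp add: reachable_def)
  qed
qed

lemma future_full: "future (S, {..<m}) = UNIV"
  using fold_full m3 by (auto simp: future_def)

lemma a_power_in_future:
  assumes S: "S \<subseteq> {..<n}" and T: "T \<subseteq> {..<m}" and q: "q < m"
  shows "replicate q a \<in> future (S,T) \<longleftrightarrow> q \<in> T"
proof (cases "0 \<in> S")
  case True
  then show ?thesis using fold_a_fill[OF S True T] q by (simp add: future_def)
next
  case False
  then show ?thesis using fold_a[OF S False T] q by (simp add: future_def rotL_def)
qed

(* A state j \<in> S - S' is detected by d^j a^(m+q) when q < m-1 is missing from T: from (S,T) the
   word fills T completely, from (S',T) it only rotates T back to itself. *)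
lemma future_separates_K:
  assumes S: "S \<subseteq> {..<n}" "S' \<subseteq> {..<n}" and T: "T \<subseteq> {..<m}"
    and j: "j \<in> S" "j \<notin> S'" and q: "q \<notin> T" "q < m - 1"
  shows "replicate j d @ replicate (m + q) a \<in> future (S,T) - future (S',T)"
proof -
  define T1 where "T1 = T \<union> (if \<exists>l. 1 \<le> l \<and> l \<le> j \<and> l mod n \<in> S then {m-1} else {})"
  define T2 where "T2 = T \<union> (if \<exists>l. 1 \<le> l \<and> l \<le> j \<and> l mod n \<in> S' then {m-1} else {})"
  have T12: "T1 \<subseteq> {..<m}" "T2 \<subseteq> {..<m}" using T m3 by (auto simp: T1_def T2_def)
  have rot: "rotK S j \<subseteq> {..<n}" "rotK S' j \<subseteq> {..<n}" by (auto simp: rotK_def)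
  have zero: "0 \<in> rotK S j" "0 \<notin> rotK S' j" using j S n3 by (auto simp: rotK_def)
  have "foldl step (S,T) (replicate j d @ replicate m a) = (rotK S j, {..<m})"
    using fold_d[OF S(1) T] fold_a_fill[OF rot(1) zero(1) T12(1), of m] by (auto simp: T1_def)
  then have "snd (foldl step (S,T) (replicate j d @ replicate (m + q) a)) = {..<m}"
    using fold_full by (simp add: replicate_add)
  then have "replicate j d @ replicate (m + q) a \<in> future (S,T)"
    using m3 by (simp add: future_def)
  moreover have "foldl step (S',T) (replicate j d @ replicate (m + q) a) = (rotK S' j, rotL T2 (m + q))"
    using fold_d[OF S(2) T] fold_a[OF rot(2) zero(2) T12(2)] by (simp add: T2_def)
  moreover have "q \<notin> T2" using q by (auto simp: T2_def)
  ultimately show ?thesis using q by (simp add: future_def rotL_def)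
qed

lemma future_separates_K_sym:
  assumes "S \<subseteq> {..<n}" "S' \<subseteq> {..<n}" "S \<noteq> S'" "T \<subseteq> {..<m}" "q \<notin> T" "q < m - 1"
  shows "future (S,T) \<noteq> future (S',T)"
proof -
  obtain j where "j \<in> S \<and> j \<notin> S' \<or> j \<in> S' \<and> j \<notin> S" using assms(3) by blast
  then show ?thesis
  proof (elim disjE conjE)
    assume "j \<in> S" "j \<notin> S'"
    from future_separates_K[OF assms(1,2,4) this assms(5,6)] show ?thesis by blast
  next
    assume "j \<in> S'" "j \<notin> S"
    from future_separates_K[OF assms(2,1,4) this assms(5,6)] show ?thesis by blast
  qed
qed

(* The case T = {..<m} - {m-1} not covered above: one letter a turns T into {..<m} - {m-2}. *)
lemma future_separates_K_last:
  assumes S: "S \<subseteq> {..<n}" "S' \<subseteq> {..<n}" "0 \<notin> S" "0 \<notin> S'" "S \<noteq> S'"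
  shows "future (S, {..<m} - {m-1}) \<noteq> future (S', {..<m} - {m-1})"
proof
  assume eq: "future (S, {..<m} - {m-1}) = future (S', {..<m} - {m-1})"
  have "rotL ({..<m} - {m-1}) 1 = {..<m} - {m-2}"
  proof -
    have "(q + 1) mod m = m-1 \<longleftrightarrow> q = m-2" if "q < m" for q
      using that m3 by (cases "q = m - 1") auto
    then show ?thesis by (auto simp: rotL_def)
  qed
  then have st: "step (S, {..<m} - {m-1}) a = (S, {..<m} - {m-2})"
    "step (S', {..<m} - {m-1}) a = (S', {..<m} - {m-2})"
    using S by (auto simp: step_a)
  have future_step: "future (step p a) = {v. a # v \<in> future p}" for p
    using future_Cons by blast
  have "future (S, {..<m} - {m-2}) = future (step (S, {..<m} - {m-1}) a)" using st(1) by simp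
  also have "\<dots> = future (step (S', {..<m} - {m-1}) a)" using eq by (simp add: future_step)
  also have "\<dots> = future (S', {..<m} - {m-2})" using st(2) by simp
  finally have "future (S, {..<m} - {m-2}) = future (S', {..<m} - {m-2})" .
  moreover have "{..<m} - {m-2} \<subseteq> {..<m}" "m-2 \<notin> {..<m} - {m-2}" "m-2 < m-1" using m3 by auto
  ultimately show False using S future_separates_K_sym by blast
qed

definition Valid_proper :: "(nat set \<times> nat set) set" where
  "Valid_proper = {(S,T) \<in> Valid. T \<noteq> {..<m}}"

lemma future_inj_L:
  assumes "(S,T) \<in> Valid" "(S',T') \<in> Valid" "future (S,T) = future (S',T')"
  shows "T = T'"
proof -
  have "q \<in> T \<longleftrightarrow> q \<in> T'" if "q < m" for q
    using a_power_in_future[OF _ _ that, of S T] a_power_in_future[OF _ _ that, of S' T'] assms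
    by (auto simp: Valid_def)
  then show ?thesis using assms(1,2) by (auto simp: Valid_def)
qed

lemma future_inj_K:
  assumes V: "(S,T) \<in> Valid_proper" "(S',T) \<in> Valid_proper" and eq: "future (S,T) = future (S',T)"
  shows "S = S'"
proof (rule ccontr)
  assume ne: "S \<noteq> S'"
  have h: "S \<subseteq> {..<n}" "S' \<subseteq> {..<n}" "T \<subseteq> {..<m}" "T \<noteq> {..<m}"
    "0 \<in> S \<longrightarrow> m-1 \<in> T" "0 \<in> S' \<longrightarrow> m-1 \<in> T"
    using V by (auto simp: Valid_proper_def Valid_def)
  show False
  proof (cases "\<exists>q < m - 1. q \<notin> T")
    case True
    then obtain q where "q < m - 1" "q \<notin> T" by blast
    then show False using future_separates_K_sym[OF h(1,2) ne h(3)] eq by blast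
  next
    case False
    have below: "q < m \<Longrightarrow> q < m - 1 \<or> q = m - 1" for q by arith
    then have "m-1 \<notin> T" using False h(3,4) by blast
    then have "T = {..<m} - {m-1}" using False h(3) below by blast
    then have "0 \<notin> S" "0 \<notin> S'" using h(5,6) m3 by auto
    then show False using future_separates_K_last[OF h(1,2) _ _ ne] eq \<open>T = {..<m} - {m-1}\<close>
      by simp
  qed
qed

lemma future_inj: "inj_on future Valid_proper"
proof (rule inj_onI, clarify)
  fix S T S' T' assume V: "(S,T) \<in> Valid_proper" "(S',T') \<in> Valid_proper"
    and eq: "future (S,T) = future (S',T')"
  have "(S,T) \<in> Valid" "(S',T') \<in> Valid" using V by (auto simp: Valid_proper_def)
  then have "T = T'" using eq by (rule future_inj_L)
  then show "S = S' \<and> T = T'" using future_inj_K V eq by blast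
qed

lemma future_proper_not_UNIV:
  assumes "p \<in> Valid_proper" shows "future p \<noteq> UNIV"
proof -
  obtain S T where p: "p = (S,T)" by (cases p)
  then have h: "S \<subseteq> {..<n}" "T \<subseteq> {..<m}" "T \<noteq> {..<m}"
    using assms by (auto simp: Valid_proper_def Valid_def)
  then obtain q where "q < m" "q \<notin> T" by blast
  then have "replicate q a \<notin> future (S,T)" using a_power_in_future[OF h(1,2)] by blast
  then show ?thesis using p by blast
qed

lemma finite_Valid: "finite Valid"
proof -
  have "Valid \<subseteq> Pow {..<n} \<times> Pow {..<m}" by (auto simp: Valid_def)
  then show ?thesis by (rule finite_subset) simp
qed

(* Counting valid pairs: 0 \<notin> S gives 2^(n-1)*2^m pairs, 0 \<in> S gives 2^(n-1)*2^(m-1). *)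
lemma card_Valid: "card Valid = 3 * 2 ^ (m + n - 2)"
proof -
  define A1 where "A1 = {S. S \<subseteq> {..<n} \<and> 0 \<notin> S} \<times> Pow {..<m}"
  define A2 where "A2 = {S. S \<subseteq> {..<n} \<and> 0 \<in> S} \<times> {T. T \<subseteq> {..<m} \<and> m-1 \<in> T}"
  have split: "Valid = A1 \<union> A2" "A1 \<inter> A2 = {}" by (auto simp: Valid_def A1_def A2_def)
  have pow: "(2::nat)^(n-1) * 2^(m-1) = 2^(m+n-2)"
    using m3 n3 by (simp add: power_add[symmetric])
  have "(2::nat)^m = 2 * 2^(m-1)" using m3 by (simp add: power_Suc[symmetric])
  then have "card A1 = 2 * 2^(m+n-2)"
    using card_subsets_without[of "{..<n}" 0] n3 pow
    by (simp add: A1_def card_cartesian_product card_Pow)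
  moreover have "card A2 = 2^(m+n-2)"
    using card_subsets_with[of "{..<n}" 0] card_subsets_with[of "{..<m}" "m-1"] n3 m3 pow
    by (simp add: A2_def card_cartesian_product)
  moreover have "card Valid = card A1 + card A2"
    using split finite_Valid by (simp add: card_Un_disjoint)
  ultimately show ?thesis by simp
qed

(* The 2^n valid pairs with full T share the future UNIV; all others have distinct futures. *)
lemma card_futures: "card (future ` Valid) = card Valid - 2^n + 1"
proof -
  define Vfull where "Vfull = Pow {..<n} \<times> {{..<m}}"
  have split: "Valid = Valid_proper \<union> Vfull" "Vfull \<subseteq> Valid"
    using m3 by (auto simp: Vfull_def Valid_def Valid_proper_def)
  have card_Vfull: "card Vfull = 2^n" by (simp add: Vfull_def card_cartesian_product card_Pow)
  have "Valid_proper = Valid - Vfull" by (auto simp: Vfull_def Valid_def Valid_proper_def)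
  then have card_proper: "card Valid_proper = card Valid - 2^n"
    using card_Diff_subset[OF _ split(2)] finite_Valid finite_subset[OF split(2)] card_Vfull by simp
  have "future ` Vfull = {UNIV}" using future_full by (auto simp: Vfull_def)
  then have "future ` Valid = future ` Valid_proper \<union> {UNIV}" using split(1) by (simp add: image_Un)
  moreover have "UNIV \<notin> future ` Valid_proper"
  proof
    assume "UNIV \<in> future ` Valid_proper"
    then obtain p where "p \<in> Valid_proper" "future p = UNIV" by (metis imageE)
    then show False using future_proper_not_UNIV by blast
  qed
  moreover have "card (future ` Valid_proper) = card Valid_proper" using future_inj by (rule card_image)
  moreover have "finite Valid_proper" using finite_Valid split(1) by auto
  ultimately show ?thesis using card_proper by simp
qed

theorem sc_L: "sc L = 3 * 2 ^ (m + n - 2) - 2 ^ n + 1"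
proof -
  have "range (lquot L) = future ` range state" by (simp add: lquot_L image_image)
  then have "range (lquot L) = future ` Valid" by (simp add: range_state)
  moreover have "finite (future ` Valid)" using finite_Valid by simp
  ultimately have "sc L = card (future ` Valid)" using sc_eq_card_quotients by metis
  then show ?thesis using card_futures card_Valid by simp
qed

end

theorem theorem6:
  fixes m n :: nat
  assumes "m \<ge> 3" and "n \<ge> 3"
  shows "sc (conc (reversal (U_dcba n)) (reversal (U_abcd m))) = 3 * 2 ^ (m + n - 2) - 2 ^ n + 1"
proof -
  interpret rev_concat m n using assms by unfold_locales
  show ?thesis using sc_L by (simp add: L_def)
qed

end
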